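(* Let $k$ be a field, $U$ a three-dimensional $k$-vector space, and $\phi_3\in D_3U^*$. Assume (a) either the characteristic of $k$ is not two, or the characteristic of $k$ is two but $\phi_3\neq x^*y^*z^*$ for every basis $x^*,y^*,z^*$ of $U^*$; and (b) $\ell\phi_3\neq0$ for every nonzero $\ell\in U$. Then $\Gamma_{\phi_3}:D_3U\otimes\bigwedge^3U\to\bigwedge^3U^*$ is not identically zero.
   Context: $U^*=\operatorname{Hom}_k(U,k)$, $D_iU^*=\operatorname{Hom}_k(\operatorname{Sym}_iU,k)$; $D_\bullet U^*$ is the divided power algebra, a module over $\operatorname{Sym}_\bullet U$ via $(uv)(u')=v(uu')$. For a basis $x,y,z$ of $U$ with dual basis $x^*,y^*,z^*$, $x^*y^*z^*$ is the element of $D_3U^*$ taking value $1$ on $xyz$ and $0$ on all other cubic monomials. $D_3U$ is the degree-$3$ divided power of $U$; for $X\in D_3U$, $\Delta(X)\in U^{\otimes3}$ is its comultiplication (for $X=\ell_1^{(e_1)}\cdots\ell_s^{(e_s)}$ with $\sum e_j=3$, the sum of all distinct words $u_1\otimes u_2\otimes u_3$ in which the symbol $\ell_j$ occurs exactly $e_j$ times, extended linearly). $\Gamma_{\phi_3}(X\otimes y_1\wedge y_2\wedge y_3)=\sum(u_1y_1\phi_3)\wedge(u_2y_2\phi_3)\wedge(u_3y_3\phi_3)$, summed over the terms of $\Delta(X)$, with $u_iy_i\in\operatorname{Sym}_2U$ acting on $\phi_3$ to give elements of $U^*$. *)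

theory Defs
  imports "HOL-Analysis.Analysis"
begin

text \<open>Coordinates: U = k^3 with standard basis e_1,e_2,e_3 (axis t 1); U^* is identified
with k^3 via coordinates w.r.t. the dual basis, i.e. f \<mapsto> (f(e_1),f(e_2),f(e_3)).
A cubic monomial of Sym_3 U (resp. divided power monomial of D_3 U) is recorded by its
exponent function 3 => nat.\<close>

definition mono3 :: "3 \<Rightarrow> 3 \<Rightarrow> 3 \<Rightarrow> (3 \<Rightarrow> nat)" where
  "mono3 i j k = (\<lambda>t. of_bool (i = t) + of_bool (j = t) + of_bool (k = t))"

text \<open>An element phi of D_3 U^* = Hom(Sym_3 U, k) is given by its values phi m on the cubic
monomials m = e_1^a e_2^b e_3^c (exponent functions with sum 3).  sym3_eval phi u v w is
the value of phi on the product u v w in Sym_3 U.\<close>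

definition sym3_eval :: "((3 \<Rightarrow> nat) \<Rightarrow> 'a::field) \<Rightarrow> 'a^3 \<Rightarrow> 'a^3 \<Rightarrow> 'a^3 \<Rightarrow> 'a" where
  "sym3_eval phi u v w =
     (\<Sum>i\<in>UNIV. \<Sum>j\<in>UNIV. \<Sum>k\<in>UNIV. u$i * v$j * w$k * phi (mono3 i j k))"

text \<open>The element l phi of D_2 U^* (for l in U), given by its values on the quadratic
monomials e_i e_j: (l phi)(e_i e_j) = phi(l e_i e_j).\<close>

definition act1 :: "((3 \<Rightarrow> nat) \<Rightarrow> 'a::field) \<Rightarrow> 'a^3 \<Rightarrow> (3 \<Rightarrow> 3 \<Rightarrow> 'a)" where
  "act1 phi l = (\<lambda>i j. sym3_eval phi l (axis i 1) (axis j 1))"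

text \<open>The element (u v) phi of U^* (for u v in Sym_2 U), in dual coordinates.\<close>

definition act2 :: "((3 \<Rightarrow> nat) \<Rightarrow> 'a::field) \<Rightarrow> 'a^3 \<Rightarrow> 'a^3 \<Rightarrow> 'a^3" where
  "act2 phi u v = (\<chi> t. sym3_eval phi u v (axis t 1))"

text \<open>phi = x^* y^* z^* for some basis x^*,y^*,z^* of U^*, expressed through the dual basis
x,y,z of U (rows of the invertible matrix b): phi takes value 1 on xyz and 0 on all other
cubic monomials in x,y,z.\<close>

definition is_xyz :: "((3 \<Rightarrow> nat) \<Rightarrow> 'a::field) \<Rightarrow> bool" where
  "is_xyz phi \<longleftrightarrow> (\<exists>b :: 'a^3^3. det b \<noteq> 0 \<and>
      sym3_eval phi (b$1) (b$2) (b$3) = 1 \<and>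
      (\<forall>p q r. (p = q \<or> q = r \<or> p = r) \<longrightarrow> sym3_eval phi (b$p) (b$q) (b$r) = 0))"

text \<open>Comultiplication: for X in D_3 U, given by its coefficients X m on the divided power
monomials e_1^(a) e_2^(b) e_3^(c), the coefficient of e_i \<otimes> e_j \<otimes> e_k in Delta(X).\<close>

definition Delta3 :: "((3 \<Rightarrow> nat) \<Rightarrow> 'a::field) \<Rightarrow> 3 \<Rightarrow> 3 \<Rightarrow> 3 \<Rightarrow> 'a" where
  "Delta3 X i j k = X (mono3 i j k)"

text \<open>Gamma_phi(X \<otimes> y1\<and>y2\<and>y3) in \<And>^3 U^*, written as its coordinate w.r.t. the basis
e_1^*\<and>e_2^*\<and>e_3^* (alpha\<and>beta\<and>gamma has coordinate det[alpha;beta;gamma]).\<close>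

definition Gamma :: "((3 \<Rightarrow> nat) \<Rightarrow> 'a::field) \<Rightarrow> ((3 \<Rightarrow> nat) \<Rightarrow> 'a) \<Rightarrow> 'a^3 \<Rightarrow> 'a^3 \<Rightarrow> 'a^3 \<Rightarrow> 'a" where
  "Gamma phi X y1 y2 y3 =
     (\<Sum>i\<in>UNIV. \<Sum>j\<in>UNIV. \<Sum>k\<in>UNIV. Delta3 X i j k *
        det (vector [act2 phi (axis i 1) y1, act2 phi (axis j 1) y2, act2 phi (axis k 1) y3] :: 'a^3^3))"

end

theory Submission
  imports Defs
begin

text \<open>
Write F for the symmetric trilinear form of phi and M_t for the matrix of F(t,-,-). Expanding the
definitions, Gamma_phi(X, y_1 y_2 y_3) is det(y_1,y_2,y_3) times the pairing of X with the cubic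
polynomial t |-> det M_t. So Gamma_phi = 0 says that this cubic is the zero polynomial, i.e. all
its polarizations vanish, and the same holds for the Gram matrices of F(t,-,-) in any basis; in
particular every M_t is singular and trace(M_b adj M_a) = 0.

If some M_x has rank two, adj M_x is a multiple of k k^T for a kernel vector k of M_x, and the trace
identity gives F(k,k,-) = 0. If k is not proportional to x, the identities in a basis (x,k,z) force
F(k,-,-) = 0, contradicting (b). If it is, F(x,x,-) = 0, and the identities in a suitable basis
(x,y,z) kill every coefficient of F except F(x,y,z) and force 2 = 0, so phi = x^* y^* z^* in
characteristic two. If every M_t has rank at most one, choose w with F(w,w,w) \<noteq> 0; the vanishing
2 x 2 minors then give F(h,-,-) = 0 for every h with F(w,w,h) = 0, contradicting (b) once more.
\<close>

section \<open>Symmetric trilinear forms\<close>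

lemma mono3_swap12: "mono3 i j k = mono3 j i k"
  and mono3_swap23: "mono3 i j k = mono3 i k j"
  by (auto simp: mono3_def fun_eq_iff)

lemma sym3_eval_swap12: "sym3_eval phi u v w = sym3_eval phi v u w"
  unfolding sym3_eval_def by (subst sum.swap) (simp add: mono3_swap12[of _ _] mult_ac)

lemma sym3_eval_swap23: "sym3_eval phi u v w = sym3_eval phi u w v"
  unfolding sym3_eval_def by (subst (2) sum.swap) (simp add: mono3_swap23[of _ _] mult_ac)

lemmas sym3_eval_commute = sym3_eval_swap12 sym3_eval_swap23

lemma sym3_eval_add1: "sym3_eval phi (u + u') v w = sym3_eval phi u v w + sym3_eval phi u' v w"
  unfolding sym3_eval_def by (simp add: distrib_right sum.distrib)

lemma sym3_eval_scale1: "sym3_eval phi (c *s u) v w = c * sym3_eval phi u v w"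
  unfolding sym3_eval_def by (simp add: sum_distrib_left mult_ac)

lemma sym3_eval_add2: "sym3_eval phi u (v + v') w = sym3_eval phi u v w + sym3_eval phi u v' w"
  by (subst (1 2 3) sym3_eval_swap12) (rule sym3_eval_add1)

lemma sym3_eval_add3: "sym3_eval phi u v (w + w') = sym3_eval phi u v w + sym3_eval phi u v w'"
  by (subst (1 2 3) sym3_eval_swap23) (rule sym3_eval_add2)

lemma sym3_eval_scale2: "sym3_eval phi u (c *s v) w = c * sym3_eval phi u v w"
  by (subst (1 2) sym3_eval_swap12) (rule sym3_eval_scale1)

lemma sym3_eval_scale3: "sym3_eval phi u v (c *s w) = c * sym3_eval phi u v w"
  by (subst (1 2) sym3_eval_swap23) (rule sym3_eval_scale2)

lemma sym3_eval_diff3: "sym3_eval phi u v (w - w') = sym3_eval phi u v w - sym3_eval phi u v w'"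
  unfolding sym3_eval_def by (simp add: right_diff_distrib left_diff_distrib sum_subtractf)

lemma vec3_eq_sum_axis: "(u::'a::comm_ring_1^3) = u$1 *s axis 1 1 + u$2 *s axis 2 1 + u$3 *s axis 3 1"
  by (simp add: vec_eq_iff forall_3 axis_def)

lemma sym3_eval_expand1: "sym3_eval phi u v w = (\<Sum>i\<in>UNIV. u$i * sym3_eval phi (axis i 1) v w)"
  by (subst vec3_eq_sum_axis[of u]) (simp add: sum_3 sym3_eval_add1 sym3_eval_scale1)

lemma sym3_eval_expand2: "sym3_eval phi u v w = (\<Sum>i\<in>UNIV. v$i * sym3_eval phi u (axis i 1) w)"
  by (subst vec3_eq_sum_axis[of v]) (simp add: sum_3 sym3_eval_add2 sym3_eval_scale2)

lemma sym3_eval_expand3: "sym3_eval phi u v w = (\<Sum>i\<in>UNIV. w$i * sym3_eval phi u v (axis i 1))"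
  by (subst vec3_eq_sum_axis[of w]) (simp add: sum_3 sym3_eval_add3 sym3_eval_scale3)

lemma mono3_eq_imp_symmetric_eq:
  assumes "mono3 i j k = mono3 a b c"
    and h12: "\<And>i j k. h i j k = h j i k" and h23: "\<And>i j k. h i j k = h i k j"
  shows "h i j k = h a b c"
  using assms(1) h12 h23 exhaust_3[of i] exhaust_3[of j] exhaust_3[of k]
    exhaust_3[of a] exhaust_3[of b] exhaust_3[of c]
  by (elim disjE) (simp_all add: mono3_def fun_eq_iff forall_3)

lemma symmetric_factors_through_mono3:
  assumes h12: "\<And>i j k. h i j k = h j i k" and h23: "\<And>i j k. h i j k = h i k j"
  shows "\<exists>X. \<forall>i j k. X (mono3 i j k) = h i j k"
proof (intro exI allI)
  fix i j k
  show "(\<lambda>m. THE v. \<exists>a b c. m = mono3 a b c \<and> v = h a b c) (mono3 i j k) = h i j k"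
    by (rule the_equality) (auto intro: mono3_eq_imp_symmetric_eq[OF _ h12 h23])
qed

section \<open>Determinants and adjugates of 3 by 3 matrices\<close>

lemma det3_rows_linear:
  fixes r1 r2 r3 u :: "'a::comm_ring_1^3"
  shows "det (vector [r1 + u, r2, r3]) = det (vector [r1, r2, r3]) + det (vector [u, r2, r3])"
    and "det (vector [r1, r2 + u, r3]) = det (vector [r1, r2, r3]) + det (vector [r1, u, r3])"
    and "det (vector [r1, r2, r3 + u]) = det (vector [r1, r2, r3]) + det (vector [r1, r2, u])"
    and "det (vector [c *s r1, r2, r3]) = c * det (vector [r1, r2, r3])"
    and "det (vector [r1, c *s r2, r3]) = c * det (vector [r1, r2, r3])"
    and "det (vector [r1, r2, c *s r3]) = c * det (vector [r1, r2, r3])"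
  by (simp_all add: det_3 algebra_simps)

lemma det3_nonzero_spans:
  fixes x y z v :: "'a::field^3"
  assumes "det (vector [x, y, z]) \<noteq> 0"
  obtains \<alpha> \<beta> \<gamma> where "v = \<alpha> *s x + \<beta> *s y + \<gamma> *s z"
proof
  let ?d = "det (vector [x, y, z])"
  have "\<forall>i. ?d * v$i = det (vector [v, y, z]) * x$i + det (vector [x, v, z]) * y$i
      + det (vector [x, y, v]) * z$i"
    by (simp add: forall_3 det_3 algebra_simps)
  then show "v = (det (vector [v, y, z]) / ?d) *s x + (det (vector [x, v, z]) / ?d) *s y
      + (det (vector [x, y, v]) / ?d) *s z"
    using assms by (simp add: vec_eq_iff field_simps)
qed

lemma det3_coordinate: "\<exists>y z :: 'a::comm_ring_1^3. \<forall>v. det (vector [y, z, v]) = v $ r"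
proof -
  consider "r = 1" | "r = 2" | "r = 3"
    using exhaust_3 by blast
  then show ?thesis
  proof cases
    case 1
    show ?thesis by (rule exI[of _ "axis 2 1"], rule exI[of _ "axis 3 1"]) (simp add: 1 det_3 axis_def)
  next
    case 2
    show ?thesis by (rule exI[of _ "axis 3 1"], rule exI[of _ "axis 1 1"]) (simp add: 2 det_3 axis_def)
  next
    case 3
    show ?thesis by (rule exI[of _ "axis 1 1"], rule exI[of _ "axis 2 1"]) (simp add: 3 det_3 axis_def)
  qed
qed

definition cross :: "'a::comm_ring^3 \<Rightarrow> 'a^3 \<Rightarrow> 'a^3" where
  "cross u v = vector [u$2 * v$3 - u$3 * v$2, u$3 * v$1 - u$1 * v$3, u$1 * v$2 - u$2 * v$1]"

definition adjugate3 :: "'a::comm_ring_1^3^3 \<Rightarrow> 'a^3^3" where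
  "adjugate3 A = transpose (vector [cross (A$2) (A$3), cross (A$3) (A$1), cross (A$1) (A$2)])"

definition bilin :: "'a::comm_ring_1^3^3 \<Rightarrow> 'a^3 \<Rightarrow> 'a^3 \<Rightarrow> 'a" where
  "bilin A u v = (\<Sum>i\<in>UNIV. \<Sum>j\<in>UNIV. u$i * A$i$j * v$j)"

lemma adjugate3_entries:
  fixes A :: "'a::comm_ring_1^3^3"
  shows "adjugate3 A $ 1 $ 1 = A$2$2 * A$3$3 - A$2$3 * A$3$2"
    "adjugate3 A $ 2 $ 1 = A$2$3 * A$3$1 - A$2$1 * A$3$3"
    "adjugate3 A $ 3 $ 1 = A$2$1 * A$3$2 - A$2$2 * A$3$1"
    "adjugate3 A $ 1 $ 2 = A$3$2 * A$1$3 - A$3$3 * A$1$2"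
    "adjugate3 A $ 2 $ 2 = A$3$3 * A$1$1 - A$3$1 * A$1$3"
    "adjugate3 A $ 3 $ 2 = A$3$1 * A$1$2 - A$3$2 * A$1$1"
    "adjugate3 A $ 1 $ 3 = A$1$2 * A$2$3 - A$1$3 * A$2$2"
    "adjugate3 A $ 2 $ 3 = A$1$3 * A$2$1 - A$1$1 * A$2$3"
    "adjugate3 A $ 3 $ 3 = A$1$1 * A$2$2 - A$1$2 * A$2$1"
  by (simp_all add: adjugate3_def cross_def transpose_def)

lemma adjugate3_0: "adjugate3 0 = 0"
  by (simp add: adjugate3_def cross_def vec_eq_iff transpose_def forall_3)

lemma matrix_mul_adjugate3: "(A::'a::comm_ring_1^3^3) ** adjugate3 A = mat (det A)"
  by (simp add: vec_eq_iff forall_3 matrix_matrix_mult_def sum_3 adjugate3_entries det_3 mat_def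
      algebra_simps)

lemma symmetric_matrix_entry: "transpose A = A \<Longrightarrow> A $ i $ j = A $ j $ i"
  by (drule arg_cong[where f = "\<lambda>M. M $ j $ i"]) (simp add: transpose_def)

lemma symmetric_adjugate3:
  fixes A :: "'a::comm_ring_1^3^3"
  assumes "transpose A = A"
  shows "transpose (adjugate3 A) = adjugate3 A"
proof -
  have "A$2$1 = A$1$2" "A$3$1 = A$1$3" "A$3$2 = A$2$3"
    using assms by (simp_all add: symmetric_matrix_entry[of A])
  then show ?thesis
    by (simp add: vec_eq_iff forall_3 transpose_def adjugate3_entries algebra_simps)
qed

lemma adjugate3_adjugate3: "adjugate3 (adjugate3 A) $ i $ j = det A * (A::'a::comm_ring_1^3^3) $ i $ j"
  using exhaust_3[of i] exhaust_3[of j]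
  by (elim disjE) (simp_all add: adjugate3_entries det_3 algebra_simps)

lemma cross_eq_0_proportional:
  assumes "cross u v = 0"
  shows "u$i * v$j = u$j * v$i"
proof -
  have "u$2 * v$3 = u$3 * v$2" "u$3 * v$1 = u$1 * v$3" "u$1 * v$2 = u$2 * v$1"
    using assms by (simp_all add: cross_def vec_eq_iff forall_3)
  then show ?thesis
    using exhaust_3[of i] exhaust_3[of j] by (elim disjE) (simp_all add: mult.commute)
qed

lemma cross_self: "cross u u = 0"
  by (simp add: cross_def vec_eq_iff forall_3 algebra_simps)

lemma cross_swap: "cross v u = - cross u v"
  by (simp add: cross_def vec_eq_iff forall_3 algebra_simps)

lemma adjugate3_eq_0_minors:
  fixes B :: "'a::comm_ring_1^3^3"
  assumes "adjugate3 B = 0"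
  shows "B$r$i * B$s$j = B$r$j * B$s$i"
proof -
  have col: "column t (adjugate3 B) = 0" for t
    using assms by (simp add: column_def vec_eq_iff)
  have "cross (B$2) (B$3) = 0" "cross (B$3) (B$1) = 0" "cross (B$1) (B$2) = 0"
    using col[of 1] col[of 2] col[of 3] by (simp_all add: adjugate3_def row_def)
  then have "cross (B$r) (B$s) = 0"
    using exhaust_3[of r] exhaust_3[of s]
    by (elim disjE) (simp_all add: cross_self, (metis cross_swap neg_equal_0_iff_equal)+)
  then show ?thesis
    by (rule cross_eq_0_proportional)
qed

lemma symmetric_singular_adjugate3_rank_one:
  fixes A :: "'a::comm_ring_1^3^3"
  assumes "transpose A = A" and "det A = 0"
  shows "adjugate3 A $ r $ r * adjugate3 A $ s $ t =
    column r (adjugate3 A) $ s * column r (adjugate3 A) $ t"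
proof -
  let ?B = "adjugate3 A"
  have "adjugate3 ?B = 0"
    using assms(2) by (simp add: vec_eq_iff adjugate3_adjugate3)
  then have "?B$r$r * ?B$s$t = ?B$r$t * ?B$s$r"
    by (rule adjugate3_eq_0_minors)
  moreover have "?B$r$t = ?B$t$r"
    using symmetric_adjugate3[OF assms(1)] by (rule symmetric_matrix_entry)
  ultimately show ?thesis
    by (simp add: column_def mult.commute)
qed

lemma bilin_minor_eq_adjugate3:
  "bilin A a c * bilin A b d - bilin A a d * bilin A b c = bilin (adjugate3 A) (cross c d) (cross a b)"
  by (simp add: bilin_def sum_3 cross_def adjugate3_entries algebra_simps)

lemma trace_mult_adjugate3:
  fixes A B :: "'a::comm_ring_1^3^3"
  shows "det (vector [A$1, A$2, B$3]) + det (vector [A$1, B$2, A$3]) + det (vector [B$1, A$2, A$3])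
    = trace (B ** adjugate3 A)"
  by (simp add: trace_def matrix_matrix_mult_def sum_3 det_3 adjugate3_entries algebra_simps)

lemma det_vector_axis3: "det (vector [a, b, axis i 1]) = cross a b $ i"
  using exhaust_3[of i] by (auto simp: det_3 cross_def axis_def algebra_simps)

lemma cross_dot_eq_det: "(\<Sum>s\<in>UNIV. cross a c $ s * k $ s) = det (vector [a, c, k])"
  by (simp add: sum_3 cross_def det_3 algebra_simps)

lemma adjugate3_eq_0_if_diagonal_0:
  fixes A :: "'a::idom^3^3"
  assumes "transpose A = A" and "det A = 0" and "\<And>r. adjugate3 A $ r $ r = 0"
  shows "adjugate3 A = 0"
proof -
  have "adjugate3 A $ s $ r ^ 2 = 0" for s r
    using symmetric_singular_adjugate3_rank_one[OF assms(1,2), of r s s] assms(3)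
    by (simp add: column_def power2_eq_square)
  then show ?thesis
    by (simp add: vec_eq_iff)
qed

lemma bilin_column_adjugate3_eq_0:
  fixes A :: "'a::comm_ring_1^3^3"
  assumes "transpose A = A" and "det A = 0"
  shows "bilin A (column r (adjugate3 A)) w = 0"
proof -
  have "bilin A (column r (adjugate3 A)) w = (\<Sum>j\<in>UNIV. w$j * (A ** adjugate3 A) $ j $ r)"
    unfolding bilin_def column_def matrix_matrix_mult_def
    by (subst sum.swap) (simp add: sum_distrib_left symmetric_matrix_entry[OF assms(1)] mult_ac)
  also have "\<dots> = 0"
    using assms(2) by (simp add: matrix_mul_adjugate3 mat_def)
  finally show ?thesis .
qed

lemma bilin_column_adjugate3_self:
  fixes A :: "'a::comm_ring_1^3^3"
  assumes "transpose A = A" and "det A = 0"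
  shows "bilin B (column r (adjugate3 A)) (column r (adjugate3 A)) =
    adjugate3 A $ r $ r * trace (B ** adjugate3 A)"
proof -
  let ?C = "adjugate3 A" and ?k = "column r (adjugate3 A)"
  have "bilin B ?k ?k = (\<Sum>s\<in>UNIV. \<Sum>t\<in>UNIV. B$s$t * (?k$s * ?k$t))"
    by (simp add: bilin_def mult_ac)
  also have "\<dots> = (\<Sum>s\<in>UNIV. \<Sum>t\<in>UNIV. B$s$t * (?C$r$r * ?C$s$t))"
    by (simp only: symmetric_singular_adjugate3_rank_one[OF assms])
  also have "\<dots> = ?C$r$r * trace (B ** ?C)"
    by (simp add: trace_def matrix_matrix_mult_def sum_distrib_left mult_ac
        symmetric_matrix_entry[OF symmetric_adjugate3[OF assms(1)]])
  finally show ?thesis .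
qed

lemma adjugate3_column_square:
  fixes A :: "'a::comm_ring_1^3^3"
  assumes "transpose A = A" and "det A = 0"
  shows "adjugate3 A $ r $ r * bilin (adjugate3 A) u u =
    (\<Sum>s\<in>UNIV. u$s * column r (adjugate3 A) $ s) ^ 2"
proof -
  let ?C = "adjugate3 A" and ?k = "column r (adjugate3 A)"
  have "?C$r$r * bilin ?C u u = (\<Sum>s\<in>UNIV. \<Sum>t\<in>UNIV. u$s * u$t * (?C$r$r * ?C$s$t))"
    by (simp add: bilin_def sum_distrib_left mult_ac)
  also have "\<dots> = (\<Sum>s\<in>UNIV. \<Sum>t\<in>UNIV. u$s * u$t * (?k$s * ?k$t))"
    by (simp only: symmetric_singular_adjugate3_rank_one[OF assms])
  also have "\<dots> = (\<Sum>s\<in>UNIV. u$s * ?k$s) ^ 2"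
    by (simp add: power2_eq_square sum_product mult_ac)
  finally show ?thesis .
qed

lemma exists_nonzero_orthogonal3:
  fixes g :: "'a::field^3"
  obtains h where "h \<noteq> 0" and "(\<Sum>t\<in>UNIV. g$t * h$t) = 0"
proof (cases "g$1 = 0 \<and> g$2 = 0")
  case True
  show thesis
    by (rule that[of "axis 1 1"]) (use True in \<open>simp_all add: sum_3 axis_def vec_eq_iff\<close>)
next
  case False
  show thesis
    by (rule that[of "vector [g$2, - g$1, 0]"])
      (use False in \<open>auto simp: sum_3 vec_eq_iff forall_3 algebra_simps\<close>)
qed

section \<open>Polar determinants\<close>

definition polar_det :: "((3 \<Rightarrow> nat) \<Rightarrow> 'a::field) \<Rightarrow> 'a^3 \<Rightarrow> 'a^3 \<Rightarrow> 'a^3 \<Rightarrow> 'a^3 \<Rightarrow> 'a^3 \<Rightarrow> 'a^3 \<Rightarrow> 'a"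
  where "polar_det phi a b c y1 y2 y3 =
    det (vector [act2 phi a y1, act2 phi b y2, act2 phi c y3] :: 'a^3^3)"

lemma Gamma_eq_polar_det_sum:
  "Gamma phi X y1 y2 y3 = (\<Sum>i\<in>UNIV. \<Sum>j\<in>UNIV. \<Sum>k\<in>UNIV.
     X (mono3 i j k) * polar_det phi (axis i 1) (axis j 1) (axis k 1) y1 y2 y3)"
  unfolding Gamma_def Delta3_def polar_det_def ..

lemma act2_expand: "act2 phi a y = (\<Sum>i\<in>UNIV. a$i *s act2 phi (axis i 1) y)"
  unfolding act2_def by (simp add: vec_eq_iff sym3_eval_expand1[of phi a])

lemma polar_det_expand:
  "polar_det phi a b c y1 y2 y3 = (\<Sum>i\<in>UNIV. \<Sum>j\<in>UNIV. \<Sum>k\<in>UNIV.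
     a$i * b$j * c$k * polar_det phi (axis i 1) (axis j 1) (axis k 1) y1 y2 y3)"
  unfolding polar_det_def
  by (subst (1 2 3) act2_expand) (simp add: sum_3 det3_rows_linear algebra_simps)

definition mixed_det :: "((3 \<Rightarrow> nat) \<Rightarrow> 'a::field) \<Rightarrow> 'a^3 \<Rightarrow> 'a^3 \<Rightarrow> 'a^3 \<Rightarrow> 'a^3 \<Rightarrow> 'a^3 \<Rightarrow> 'a^3 \<Rightarrow> 'a"
  where "mixed_det phi a b c x y z = det (vector [
    vector [sym3_eval phi a x x, sym3_eval phi a x y, sym3_eval phi a x z],
    vector [sym3_eval phi b y x, sym3_eval phi b y y, sym3_eval phi b y z],
    vector [sym3_eval phi c z x, sym3_eval phi c z y, sym3_eval phi c z z]] :: 'a^3^3)"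

lemma sym3_eval_eq_act2_sum: "sym3_eval phi a y w = (\<Sum>t\<in>UNIV. act2 phi a y $ t * w $ t)"
  unfolding act2_def by (simp add: sym3_eval_expand3[of phi a y w] mult.commute)

lemma mixed_det_eq_polar_det:
  "mixed_det phi a b c x y z = polar_det phi a b c x y z * det (vector [x, y, z] :: 'a::field^3^3)"
proof -
  have "vector [
    vector [sym3_eval phi a x x, sym3_eval phi a x y, sym3_eval phi a x z],
    vector [sym3_eval phi b y x, sym3_eval phi b y y, sym3_eval phi b y z],
    vector [sym3_eval phi c z x, sym3_eval phi c z y, sym3_eval phi c z z]] =
    (vector [act2 phi a x, act2 phi b y, act2 phi c z] :: 'a^3^3) ** transpose (vector [x, y, z] :: 'a^3^3)"
    by (simp add: vec_eq_iff forall_3 matrix_matrix_mult_def transpose_def sym3_eval_eq_act2_sum)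
  then show ?thesis
    unfolding mixed_det_def polar_det_def by (simp add: det_mul)
qed

definition polar_matrix :: "((3 \<Rightarrow> nat) \<Rightarrow> 'a::field) \<Rightarrow> 'a^3 \<Rightarrow> 'a^3^3" where
  "polar_matrix phi x = (\<chi> i j. sym3_eval phi x (axis i 1) (axis j 1))"

lemma symmetric_polar_matrix: "transpose (polar_matrix phi x) = polar_matrix phi x"
  by (simp add: vec_eq_iff transpose_def polar_matrix_def sym3_eval_swap23[of phi x])

lemma sym3_eval_eq_bilin: "sym3_eval phi x a c = bilin (polar_matrix phi x) a c"
proof -
  have "sym3_eval phi x a c = (\<Sum>i\<in>UNIV. a$i * sym3_eval phi x (axis i 1) c)"
    by (rule sym3_eval_expand2)
  also have "\<dots> = (\<Sum>i\<in>UNIV. a$i * (\<Sum>j\<in>UNIV. c$j * sym3_eval phi x (axis i 1) (axis j 1)))"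
    by (simp only: sym3_eval_expand3[where w = c])
  finally show ?thesis
    by (simp add: bilin_def polar_matrix_def sum_distrib_left mult_ac)
qed

lemma polar_matrix_0: "polar_matrix phi 0 = 0"
  using sym3_eval_scale1[of phi 0] by (simp add: polar_matrix_def vec_eq_iff)

lemma vector_rows3: "vector [A$1, A$2, A$3] = (A::'a::zero^3^3)"
  by (simp add: vec_eq_iff forall_3)

lemma mixed_det_standard_basis:
  "mixed_det phi a b c (axis 1 1) (axis 2 1) (axis 3 1) =
    det (vector [polar_matrix phi a $ 1, polar_matrix phi b $ 2, polar_matrix phi c $ 3])"
  unfolding mixed_det_def by (intro arg_cong[where f = det]) (simp add: polar_matrix_def vec_eq_iff forall_3)

lemma sym3_eval_zero_from_basis:
  assumes "det (vector [x, y, z]) \<noteq> 0"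
    and "\<And>a c. a \<in> {x, y, z} \<Longrightarrow> c \<in> {x, y, z} \<Longrightarrow> sym3_eval phi u a c = 0"
  shows "sym3_eval phi u a c = 0"
proof -
  obtain a1 a2 a3 where a: "a = a1 *s x + a2 *s y + a3 *s z"
    using det3_nonzero_spans[OF assms(1)] .
  obtain c1 c2 c3 where c: "c = c1 *s x + c2 *s y + c3 *s z"
    using det3_nonzero_spans[OF assms(1)] .
  show ?thesis
    unfolding a c by (simp add: sym3_eval_add2 sym3_eval_add3 sym3_eval_scale2 sym3_eval_scale3 assms(2))
qed

lemma char_two_if_two_eq_0:
  assumes "(2::'a::field) = 0"
  shows "CHAR('a) = 2"
proof -
  have "of_nat 2 = (0::'a)"
    using assms by simp
  then have "CHAR('a) dvd 2"
    by (simp only: of_nat_eq_0_iff_char_dvd)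
  then show ?thesis
    using CHAR_not_1'[where 'a = 'a] prime_nat_iff[of 2] by auto
qed

section \<open>Forms with vanishing Gamma\<close>

locale vanishing_Gamma =
  fixes phi :: "(3 \<Rightarrow> nat) \<Rightarrow> 'a::field"
  assumes Gamma_zero: "\<And>X y1 y2 y3. Gamma phi X y1 y2 y3 = 0"
    and nondegenerate: "\<And>l. (\<And>a c. sym3_eval phi l a c = 0) \<Longrightarrow> l = 0"
begin

abbreviation F where "F \<equiv> sym3_eval phi"

lemma polar_det_symmetric_sum:
  assumes h12: "\<And>i j k. h i j k = h j i k" and h23: "\<And>i j k. h i j k = h i k j"
  shows "(\<Sum>i\<in>UNIV. \<Sum>j\<in>UNIV. \<Sum>k\<in>UNIV.
    h i j k * polar_det phi (axis i 1) (axis j 1) (axis k 1) y1 y2 y3) = 0"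
proof -
  obtain X where "\<And>i j k. X (mono3 i j k) = h i j k"
    using symmetric_factors_through_mono3[of h] h12 h23 by metis
  then show ?thesis using Gamma_zero[of X y1 y2 y3] by (simp add: Gamma_eq_polar_det_sum)
qed

lemma polar_det_cube: "polar_det phi a a a y1 y2 y3 = 0"
  using polar_det_symmetric_sum[of "\<lambda>i j k. a$i * a$j * a$k" y1 y2 y3]
  by (simp add: polar_det_expand[of phi a a a] mult_ac)

lemma polar_det_polar2:
  "polar_det phi a a b y1 y2 y3 + polar_det phi a b a y1 y2 y3 + polar_det phi b a a y1 y2 y3 = 0"
proof -
  have "(\<Sum>i\<in>UNIV. \<Sum>j\<in>UNIV. \<Sum>k\<in>UNIV. (a$i * a$j * b$k + a$i * b$j * a$k + b$i * a$j * a$k)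
     * polar_det phi (axis i 1) (axis j 1) (axis k 1) y1 y2 y3) = 0"
    by (rule polar_det_symmetric_sum) (simp_all add: algebra_simps)
  then show ?thesis
    unfolding polar_det_expand[of phi a a b] polar_det_expand[of phi a b a]
      polar_det_expand[of phi b a a]
    by (simp only: flip: sum.distrib distrib_right)
qed

lemma polar_det_polar3:
  "polar_det phi a b c y1 y2 y3 + polar_det phi a c b y1 y2 y3 + polar_det phi b a c y1 y2 y3
   + polar_det phi b c a y1 y2 y3 + polar_det phi c a b y1 y2 y3 + polar_det phi c b a y1 y2 y3 = 0"
proof -
  have "(\<Sum>i\<in>UNIV. \<Sum>j\<in>UNIV. \<Sum>k\<in>UNIV. (a$i * b$j * c$k + a$i * c$j * b$k + b$i * a$j * c$k
      + b$i * c$j * a$k + c$i * a$j * b$k + c$i * b$j * a$k)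
     * polar_det phi (axis i 1) (axis j 1) (axis k 1) y1 y2 y3) = 0"
    by (rule polar_det_symmetric_sum) (simp_all add: algebra_simps)
  then show ?thesis
    unfolding polar_det_expand[of phi a b c] polar_det_expand[of phi a c b] polar_det_expand[of phi b a c]
      polar_det_expand[of phi b c a] polar_det_expand[of phi c a b] polar_det_expand[of phi c b a]
    by (simp only: flip: sum.distrib distrib_right)
qed

lemma mixed_det_cube: "mixed_det phi a a a x y z = 0"
  by (simp add: mixed_det_eq_polar_det polar_det_cube)

lemma mixed_det_polar2:
  "mixed_det phi a a b x y z + mixed_det phi a b a x y z + mixed_det phi b a a x y z = 0"
  using polar_det_polar2[of a b x y z]
  unfolding mixed_det_eq_polar_det by (simp only: flip: distrib_right) simp

lemma mixed_det_polar3: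
  "mixed_det phi a b c x y z + mixed_det phi a c b x y z + mixed_det phi b a c x y z
   + mixed_det phi b c a x y z + mixed_det phi c a b x y z + mixed_det phi c b a x y z = 0"
  using polar_det_polar3[of a b c x y z]
  unfolding mixed_det_eq_polar_det by (simp only: flip: distrib_right) simp

lemma det_polar_matrix: "det (polar_matrix phi x) = 0"
  using mixed_det_cube[of x "axis 1 1" "axis 2 1" "axis 3 1"]
  by (simp add: mixed_det_standard_basis vector_rows3)

lemma trace_polar_matrix_adjugate3: "trace (polar_matrix phi v ** adjugate3 (polar_matrix phi x)) = 0"
  using mixed_det_polar2[of x v "axis 1 1" "axis 2 1" "axis 3 1"]
  by (simp add: mixed_det_standard_basis flip: trace_mult_adjugate3)

lemma common_kernel_vector_impossible:
  assumes basis: "det (vector [x, y, z]) \<noteq> 0"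
    and xy: "\<And>w. F x y w = 0" and yy: "\<And>w. F y y w = 0"
    and minor: "F x x x * F x z z - F x x z ^ 2 \<noteq> 0"
  shows False
proof -
  note vanishing = xy[of x] xy[of y] xy[of z] yy[of x] yy[of y] yy[of z]
  have "mixed_det phi z z z x y z = - (F x x z * F y z z ^ 2)"
    using vanishing unfolding mixed_det_def det_3 vector_3
    by (simp add: sym3_eval_commute power2_eq_square algebra_simps)
  moreover have "mixed_det phi z z x x y z + mixed_det phi z x z x y z + mixed_det phi x z z x y z
      = - (F x x x * F y z z ^ 2)"
    using vanishing unfolding mixed_det_def det_3 vector_3
    by (simp add: sym3_eval_commute power2_eq_square algebra_simps)
  ultimately have "F x x z * F y z z ^ 2 = 0" "F x x x * F y z z ^ 2 = 0"
    using mixed_det_cube[of z x y z] mixed_det_polar2[of z x x y z] by simp_all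
  then have yzz: "F y z z = 0"
    using minor by auto
  have "F y a c = 0" for a c
    by (rule sym3_eval_zero_from_basis[OF basis])
      (use vanishing yzz in \<open>auto simp: sym3_eval_commute\<close>)
  then have "y = 0"
    by (rule nondegenerate)
  with basis show False
    by (simp add: det_3)
qed

lemma is_xyz_if_only_xyz_term:
  assumes basis: "det (vector [x, y, z]) \<noteq> 0" and s: "F x y z \<noteq> 0"
    and xx: "\<And>w. F x x w = 0"
    and vanishing: "F x y y = 0" "F x z z = 0" "F y y y = 0" "F y y z = 0" "F y z z = 0" "F z z z = 0"
  shows "is_xyz phi"
proof -
  define b :: "'a^3^3" where "b = vector [(1 / F x y z) *s x, y, z]"
  have "det b \<noteq> 0"
    using basis s by (simp add: b_def det3_rows_linear)
  moreover have "F (b$1) (b$2) (b$3) = 1"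
    using s by (simp add: b_def sym3_eval_scale1)
  moreover have "F (b$p) (b$q) (b$r) = 0" if "p = q \<or> q = r \<or> p = r" for p q r
    using that xx[of x] xx[of y] xx[of z] vanishing exhaust_3[of p] exhaust_3[of q] exhaust_3[of r]
    by (elim disjE) (simp_all add: b_def sym3_eval_scale1 sym3_eval_scale2 sym3_eval_scale3 sym3_eval_commute)
  ultimately show ?thesis
    unfolding is_xyz_def by blast
qed

lemma self_kernel_vector_polar_plane:
  assumes xx: "\<And>w. F x x w = 0"
    and minor: "F x y y * F x z z - F x y z ^ 2 \<noteq> 0"
  shows "F x y y = 0" and "F x z z = 0"
proof -
  note vanishing = xx[of x] xx[of y] xx[of z]
  have "mixed_det phi y y x x y z + mixed_det phi y x y x y z + mixed_det phi x y y x y z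
      = F x y y * (F x y z ^ 2 - F x y y * F x z z)"
    using vanishing unfolding mixed_det_def det_3 vector_3
    by (simp add: sym3_eval_commute power2_eq_square algebra_simps)
  then show "F x y y = 0"
    using mixed_det_polar2[of y x x y z] minor by auto
  have "mixed_det phi z z x x y z + mixed_det phi z x z x y z + mixed_det phi x z z x y z
      = F x z z * (F x y z ^ 2 - F x y y * F x z z)"
    using vanishing unfolding mixed_det_def det_3 vector_3
    by (simp add: sym3_eval_commute power2_eq_square algebra_simps)
  then show "F x z z = 0"
    using mixed_det_polar2[of z x x y z] minor by auto
qed

lemma xyz_if_self_kernel_vector:
  assumes basis: "det (vector [x, y, z]) \<noteq> 0"
    and xx: "\<And>w. F x x w = 0"
    and minor: "F x y y * F x z z - F x y z ^ 2 \<noteq> 0"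
  shows "CHAR('a) = 2 \<and> is_xyz phi"
proof -
  define s where "s = F x y z"
  note xyy = self_kernel_vector_polar_plane(1)[OF xx minor]
    and xzz = self_kernel_vector_polar_plane(2)[OF xx minor]
  have s: "s \<noteq> 0"
    using minor by (simp add: xyy xzz s_def)
  note vanishing = xx[of x] xx[of y] xx[of z] xyy xzz
  have "mixed_det phi y y y x y z = - (F y y y * s ^ 2)"
    using vanishing unfolding mixed_det_def det_3 vector_3 s_def
    by (simp add: sym3_eval_commute power2_eq_square algebra_simps)
  then have yyy: "F y y y = 0"
    using mixed_det_cube[of y x y z] s by simp
  have "mixed_det phi z z z x y z = - (F z z z * s ^ 2)"
    using vanishing unfolding mixed_det_def det_3 vector_3 s_def
    by (simp add: sym3_eval_commute power2_eq_square algebra_simps)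
  then have zzz: "F z z z = 0"
    using mixed_det_cube[of z x y z] s by simp
  note vanishing = vanishing yyy zzz
  have "mixed_det phi y y z x y z + mixed_det phi y z y x y z + mixed_det phi z y y x y z
      = F y y z * s ^ 2"
    using vanishing unfolding mixed_det_def det_3 vector_3 s_def
    by (simp add: sym3_eval_commute power2_eq_square algebra_simps)
  then have yyz: "F y y z = 0"
    using mixed_det_polar2[of y z x y z] s by simp
  have "mixed_det phi z z y x y z + mixed_det phi z y z x y z + mixed_det phi y z z x y z
      = F y z z * s ^ 2"
    using vanishing unfolding mixed_det_def det_3 vector_3 s_def
    by (simp add: sym3_eval_commute power2_eq_square algebra_simps)
  then have yzz: "F y z z = 0"
    using mixed_det_polar2[of z y x y z] s by simp
  note vanishing = vanishing yyz yzz
  have "mixed_det phi x y z x y z + mixed_det phi x z y x y z + mixed_det phi y x z x y z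
      + mixed_det phi y z x x y z + mixed_det phi z x y x y z + mixed_det phi z y x x y z = 2 * s ^ 3"
    using vanishing unfolding mixed_det_def det_3 vector_3 s_def
    by (simp add: sym3_eval_commute power3_eq_cube algebra_simps)
  then have "(2::'a) = 0"
    using mixed_det_polar3[of x y z x y z] s by simp
  then show ?thesis
    using char_two_if_two_eq_0 is_xyz_if_only_xyz_term[OF basis s[unfolded s_def] xx xyy xzz yyy yyz yzz zzz]
    by blast
qed

lemma polar_matrix_adjugate3_column:
  fixes x :: "'a^3" and r :: 3
  defines "k \<equiv> column r (adjugate3 (polar_matrix phi x))"
  shows "F x k w = 0" and "F k k w = 0"
    and "adjugate3 (polar_matrix phi x) $ r $ r * (F x a a * F x c c - F x a c ^ 2) =
      det (vector [a, c, k]) ^ 2"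
proof -
  let ?M = "polar_matrix phi x"
  note M_sym = symmetric_polar_matrix[of phi x] and M_sing = det_polar_matrix[of x]
  show "F x k w = 0"
    unfolding sym3_eval_eq_bilin k_def by (rule bilin_column_adjugate3_eq_0[OF M_sym M_sing])
  show "F k k w = 0"
    using bilin_column_adjugate3_self[OF M_sym M_sing, of "polar_matrix phi w" r]
      trace_polar_matrix_adjugate3[of w x]
    by (simp add: sym3_eval_eq_bilin[symmetric] sym3_eval_commute k_def)
  have "F x a a * F x c c - F x a c ^ 2 = bilin (adjugate3 ?M) (cross a c) (cross a c)"
    using bilin_minor_eq_adjugate3[of ?M a a c c]
    by (simp add: sym3_eval_eq_bilin[symmetric] power2_eq_square sym3_eval_commute)
  then show "adjugate3 ?M $ r $ r * (F x a a * F x c c - F x a c ^ 2) = det (vector [a, c, k]) ^ 2"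
    using adjugate3_column_square[OF M_sym M_sing, of r "cross a c"] cross_dot_eq_det[of a c k]
    by (simp add: k_def)
qed

lemma xyz_if_polar_matrix_rank_two:
  assumes rank_two: "adjugate3 (polar_matrix phi x) $ r $ r \<noteq> 0"
  shows "CHAR('a) = 2 \<and> is_xyz phi"
proof -
  define k where "k = column r (adjugate3 (polar_matrix phi x))"
  note xk = polar_matrix_adjugate3_column(1)[where x = x and r = r, folded k_def]
    and kk = polar_matrix_adjugate3_column(2)[where x = x and r = r, folded k_def]
    and minor = polar_matrix_adjugate3_column(3)[where x = x and r = r, folded k_def]
  show ?thesis
  proof (cases "cross x k = 0")
    case False
    then obtain i where "cross x k $ i \<noteq> 0"
      by (auto simp: vec_eq_iff)
    then have basis: "det (vector [x, k, axis i 1]) \<noteq> 0"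
      by (simp add: det_vector_axis3)
    moreover have "det (vector [x, axis i 1, k]) = - det (vector [x, k, axis i 1])"
      by (simp add: det_3 algebra_simps)
    ultimately have "F x x x * F x (axis i 1) (axis i 1) - F x x (axis i 1) ^ 2 \<noteq> 0"
      using minor[of x "axis i 1"] rank_two by auto
    then show ?thesis
      using common_kernel_vector_impossible[OF basis xk kk] by blast
  next
    case True
    have kr: "k$r \<noteq> 0"
      using rank_two by (simp add: k_def column_def)
    have x_eq: "x = (x$r / k$r) *s k"
      using cross_eq_0_proportional[OF True, of r] kr
      by (simp add: vec_eq_iff field_simps)
    have xx: "F x x w = 0" for w
      by (subst (2) x_eq) (simp add: sym3_eval_scale2 xk)
    have "x \<noteq> 0"
      using rank_two by (auto simp: polar_matrix_0 adjugate3_0)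
    then have xr: "x$r \<noteq> 0"
      using x_eq by auto
    obtain y z :: "'a^3" where coord: "\<And>v. det (vector [y, z, v]) = v $ r"
      using det3_coordinate[of r] by blast
    have "det (vector [x, y, z]) = det (vector [y, z, x])"
      by (simp add: det_3 algebra_simps)
    then have basis: "det (vector [x, y, z]) \<noteq> 0"
      using xr coord by simp
    have "F x y y * F x z z - F x y z ^ 2 \<noteq> 0"
      using minor[of y z] coord[of k] kr rank_two by auto
    then show ?thesis
      by (rule xyz_if_self_kernel_vector[OF basis xx])
  qed
qed

lemma cube_nonzero_if_rank_one:
  assumes minors: "\<And>x a b c d. F x a c * F x b d = F x a d * F x b c"
  shows "\<exists>w. F w w w \<noteq> 0"
proof -
  have "axis 1 1 \<noteq> (0::'a^3)"
    by (simp add: vec_eq_iff axis_def)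
  then obtain a c where "F (axis 1 1) a c \<noteq> 0"
    using nondegenerate by blast
  then have "F (axis 1 1) a a \<noteq> 0"
    using minors[of "axis 1 1" a a c c] by (auto simp: sym3_eval_commute)
  then have "F a a a \<noteq> 0"
    using minors[of a a a "axis 1 1" "axis 1 1"] by (auto simp: sym3_eval_commute)
  then show ?thesis ..
qed

lemma kernel_of_rank_one_polar_matrices:
  assumes minors: "\<And>x a b c d. F x a c * F x b d = F x a d * F x b c"
    and c: "F w w w \<noteq> 0" and wv: "F w w v = 0" and wv': "F w w v' = 0"
  shows "F u v v' = 0"
proof -
  have wvw: "F w v w = 0"
    using wv by (simp add: sym3_eval_commute)
  have "F w w w * F w v v' = F w w v' * F w v w"
    by (rule minors)
  then have wvv': "F w v v' = 0"
    using c wv' by simp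
  have "F u w w * F u v v' = F u w v' * F u v w"
    by (rule minors)
  moreover have "F (w + u) w w * F (w + u) v v' = F (w + u) w v' * F (w + u) v w"
    by (rule minors)
  then have "(F w w w + F u w w) * F u v v' = F u w v' * F u v w"
    using wv' wvw wvv' by (simp add: sym3_eval_add1)
  ultimately have "F w w w * F u v v' = 0"
    by algebra
  then show ?thesis
    using c by simp
qed

lemma polar_matrices_not_all_rank_one:
  assumes rank_one: "\<And>x. adjugate3 (polar_matrix phi x) = 0"
  shows False
proof -
  have minors: "F x a c * F x b d = F x a d * F x b c" for x a b c d
    using bilin_minor_eq_adjugate3[of "polar_matrix phi x" a c b d] rank_one[of x]
    by (simp add: sym3_eval_eq_bilin bilin_def)
  note kernel = kernel_of_rank_one_polar_matrices[OF minors]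
  obtain w where c: "F w w w \<noteq> 0"
    using cube_nonzero_if_rank_one[OF minors] by blast
  obtain h where "h \<noteq> 0" and "(\<Sum>t\<in>UNIV. (\<chi> t. F w w (axis t 1)) $ t * h$t) = 0"
    by (rule exists_nonzero_orthogonal3[where g = "\<chi> t. F w w (axis t 1)"])
  then have wh: "F w w h = 0"
    by (simp add: sym3_eval_expand3[of phi w w h] mult.commute)
  have "F h p q = 0" for p q
  proof -
    define p' where "p' = p - (F w w p / F w w w) *s w"
    define q' where "q' = q - (F w w q / F w w w) *s w"
    have wp': "F w w p' = 0" and wq': "F w w q' = 0"
      using c by (simp_all add: p'_def q'_def sym3_eval_diff3 sym3_eval_scale3)
    have "F h p q = F h (p' + (F w w p / F w w w) *s w) (q' + (F w w q / F w w w) *s w)"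
      by (simp add: p'_def q'_def)
    also have "\<dots> = 0"
      using kernel[OF c wh wq', of w] kernel[OF c wh wp', of w] kernel[OF c wp' wq', of h] wh
      by (simp add: sym3_eval_add2 sym3_eval_add3 sym3_eval_scale2 sym3_eval_scale3 sym3_eval_commute)
    finally show ?thesis .
  qed
  then have "h = 0"
    by (rule nondegenerate)
  with \<open>h \<noteq> 0\<close> show False ..
qed

theorem char_two_and_xyz: "CHAR('a) = 2 \<and> is_xyz phi"
proof (cases "\<exists>x r. adjugate3 (polar_matrix phi x) $ r $ r \<noteq> 0")
  case True
  then obtain x r where "adjugate3 (polar_matrix phi x) $ r $ r \<noteq> 0"
    by blast
  then show ?thesis
    by (rule xyz_if_polar_matrix_rank_two)
next
  case False
  then have "adjugate3 (polar_matrix phi x) = 0" for x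
    using adjugate3_eq_0_if_diagonal_0[OF symmetric_polar_matrix det_polar_matrix] by blast
  then show ?thesis
    using polar_matrices_not_all_rank_one by blast
qed

end

theorem lemma8p2:
  fixes phi :: "(3 \<Rightarrow> nat) \<Rightarrow> 'a::field"
  assumes a: "CHAR('a) \<noteq> 2 \<or> (CHAR('a) = 2 \<and> \<not> is_xyz phi)"
    and b: "\<forall>l :: 'a^3. l \<noteq> 0 \<longrightarrow> act1 phi l \<noteq> (\<lambda>i j. 0)"
  shows "\<exists>X y1 y2 y3. Gamma phi X y1 y2 y3 \<noteq> 0"
proof (rule ccontr)
  assume "\<not> ?thesis"
  then interpret vanishing_Gamma phi
  proof unfold_locales
    fix l :: "'a^3"
    assume "\<And>a c. sym3_eval phi l a c = 0"
    then have "act1 phi l = (\<lambda>i j. 0)"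
      by (simp add: act1_def)
    with b show "l = 0"
      by blast
  qed auto
  from char_two_and_xyz a show False
    by blast
qed

end
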